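(* Let $\mathcal M$ be an o-minimal structure in a language $\mathcal L$ with universe $M$, and $\mathcal N$ an expansion of $\mathcal M$ such that every open definable set is $\mathcal L$-definable and $\mathcal N$ admits a dimension function $\dim$ compatible with $\mathcal M$. Then a finite union of full definable subsets of $M^n$ is full.
   Context: "Definable" means definable in $\mathcal N$ with parameters; "$\mathcal L$-definable" means definable in $\mathcal M$ with parameters. A dimension function compatible with $\mathcal M$ is a map $\dim$ from definable sets to $\{-\infty\}\cup\mathbb N$ such that for all definable $X,Y\subseteq M^n$, $a\in M$: (D1) $\dim\{a\}=0$, $\dim M=1$, $\dim X=-\infty$ iff $X=\emptyset$; (D2) $\dim(X\cup Y)=\max\{\dim X,\dim Y\}$; (D3) for a definable family $\{X_t\}_{t\in I}$ of pairwise disjoint sets: (a) each $\{t\in I:\dim X_t=d\}$ is definable; (b) if all $X_t$ have dimension $k$ then $\dim\bigcup_t X_t=\dim I+k$; (D4) definable bijections preserve $\dim$; (D5) on $\mathcal L$-definable sets $\dim$ is the o-minimal dimension; (D6) every definable $f:M^n\to M$ agrees with an $\mathcal L$-definable $F:M^n\to M$ outside a definable set of dimension $<n$. $cl$ denotes topological closure. A definable set $X$ is full if $\dim(cl(X)\setminus X)<\dim X$. *)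

theory Defs
  imports Main "HOL-Library.Extended_Real"
begin

text \<open>Points of M^n are lists of length n over the universe type 'a.\<close>

definition tuples :: "nat \<Rightarrow> 'a list set" where
  "tuples n = {x. length x = n}"

text \<open>A structure on M in the sense of van den Dries (Tame Topology, Ch. 1):
  S m is the collection of definable (with parameters) subsets of M^m.\<close>

definition is_structure :: "(nat \<Rightarrow> 'a list set set) \<Rightarrow> bool" where
  "is_structure S \<longleftrightarrow>
     (\<forall>m. S m \<subseteq> Pow (tuples m)
        \<and> tuples m \<in> S m
        \<and> (\<forall>A\<in>S m. \<forall>B\<in>S m. A \<union> B \<in> S m)
        \<and> (\<forall>A\<in>S m. tuples m - A \<in> S m)
        \<and> (\<forall>A\<in>S m. {a # x | a x. x \<in> A} \<in> S (Suc m))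
        \<and> (\<forall>A\<in>S m. {x @ [a] | x a. x \<in> A} \<in> S (Suc m))
        \<and> (1 \<le> m \<longrightarrow> {x \<in> tuples m. x ! 0 = x ! (m - 1)} \<in> S m)
        \<and> (\<forall>A\<in>S (Suc m). butlast ` A \<in> S m))"

definition interval_or_point :: "('a::linorder) set \<Rightarrow> bool" where
  "interval_or_point I \<longleftrightarrow>
     (\<exists>a. I = {a}) \<or> (\<exists>a b. I = {a<..<b}) \<or> (\<exists>a. I = {a<..}) \<or> (\<exists>b. I = {..<b})
     \<or> I = UNIV"

definition o_minimal_structure :: "(nat \<Rightarrow> ('a::{dense_linorder,no_bot,no_top}) list set set) \<Rightarrow> bool" where
  "o_minimal_structure S \<longleftrightarrow>
     is_structure S
     \<and> {[x, y] | x y. x < y} \<in> S 2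
     \<and> (\<forall>a. {[a]} \<in> S 1)
     \<and> (\<forall>A\<in>S 1. \<exists>F. finite F \<and> (\<forall>I\<in>F. interval_or_point I) \<and> A = (\<lambda>x. [x]) ` (\<Union>F))"

definition expansion :: "(nat \<Rightarrow> 'a list set set) \<Rightarrow> (nat \<Rightarrow> 'a list set set) \<Rightarrow> bool" where
  "expansion N S \<longleftrightarrow> is_structure N \<and> (\<forall>m. S m \<subseteq> N m)"

text \<open>Order (product) topology on M^n via open boxes.\<close>

definition box :: "('a::linorder) list \<Rightarrow> 'a list \<Rightarrow> 'a list set" where
  "box a b = {x. length x = length a \<and> (\<forall>i<length a. a ! i < x ! i \<and> x ! i < b ! i)}"

definition open_in_tuples :: "nat \<Rightarrow> ('a::linorder) list set \<Rightarrow> bool" where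
  "open_in_tuples n X \<longleftrightarrow> X \<subseteq> tuples n \<and>
     (\<forall>x\<in>X. \<exists>a b. length a = n \<and> length b = n \<and> x \<in> box a b \<and> box a b \<subseteq> X)"

definition cl :: "nat \<Rightarrow> ('a::linorder) list set \<Rightarrow> 'a list set" where
  "cl n X = {x \<in> tuples n. \<forall>a b. length a = n \<and> length b = n \<and> x \<in> box a b \<longrightarrow> box a b \<inter> X \<noteq> {}}"

definition has_interior :: "nat \<Rightarrow> ('a::linorder) list set \<Rightarrow> bool" where
  "has_interior n Y \<longleftrightarrow> (\<exists>a b. length a = n \<and> length b = n \<and> (\<forall>i<n. a ! i < b ! i) \<and> box a b \<subseteq> Y)"

definition coord_proj :: "nat set \<Rightarrow> 'a list \<Rightarrow> 'a list" where
  "coord_proj S x = map (\<lambda>i. x ! i) (sorted_list_of_set S)"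

definition odim :: "nat \<Rightarrow> ('a::linorder) list set \<Rightarrow> ereal" where
  "odim n X = (if X = {} then -\<infinity> else
     ereal (real (Max {card S | S. S \<subseteq> {..<n} \<and> has_interior (card S) (coord_proj S ` X)})))"

definition fiber :: "'a list \<Rightarrow> 'a list set \<Rightarrow> 'a list set" where
  "fiber t Z = {x. t @ x \<in> Z}"

definition dimension_function ::
  "(nat \<Rightarrow> ('a::{dense_linorder,no_bot,no_top}) list set set) \<Rightarrow> (nat \<Rightarrow> 'a list set set)
     \<Rightarrow> ('a list set \<Rightarrow> ereal) \<Rightarrow> bool" where
  "dimension_function N L dm \<longleftrightarrow>
     (\<forall>n. \<forall>X\<in>N n. dm X \<in> insert (-\<infinity>) (range (\<lambda>k::nat. ereal (real k))))
     \<comment> \<open>(D1)\<close>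
     \<and> (\<forall>a. dm {[a]} = 0)
     \<and> dm (tuples 1) = 1
     \<and> (\<forall>n. \<forall>X\<in>N n. dm X = -\<infinity> \<longleftrightarrow> X = {})
     \<comment> \<open>(D2)\<close>
     \<and> (\<forall>n. \<forall>X\<in>N n. \<forall>Y\<in>N n. dm (X \<union> Y) = max (dm X) (dm Y))
     \<comment> \<open>(D3) definable families {fiber t Z}_{t \<in> I}\<close>
     \<and> (\<forall>m n I Z. I \<in> N m \<longrightarrow> Z \<in> N (m + n) \<longrightarrow>
           (\<forall>s\<in>I. \<forall>t\<in>I. s \<noteq> t \<longrightarrow> fiber s Z \<inter> fiber t Z = {}) \<longrightarrow>
           (\<forall>d. {t \<in> I. dm (fiber t Z) = d} \<in> N m)
           \<and> (\<forall>k::nat. (\<forall>t\<in>I. dm (fiber t Z) = ereal (real k)) \<longrightarrow>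
                 dm (\<Union>t\<in>I. fiber t Z) = dm I + ereal (real k)))
     \<comment> \<open>(D4) definable bijections preserve dimension\<close>
     \<and> (\<forall>n m X Y f. X \<in> N n \<longrightarrow> Y \<in> N m \<longrightarrow> bij_betw f X Y \<longrightarrow>
           {x @ f x | x. x \<in> X} \<in> N (n + m) \<longrightarrow> dm X = dm Y)
     \<comment> \<open>(D5)\<close>
     \<and> (\<forall>n. \<forall>X\<in>L n. dm X = odim n X)
     \<comment> \<open>(D6)\<close>
     \<and> (\<forall>n f. {x @ [f x] | x. x \<in> tuples n} \<in> N (Suc n) \<longrightarrow>
           (\<exists>F D. {x @ [F x] | x. x \<in> tuples n} \<in> L (Suc n) \<and> D \<in> N n
                  \<and> dm D < ereal (real n) \<and> (\<forall>x \<in> tuples n - D. f x = F x)))"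

definition full :: "('a list set \<Rightarrow> ereal) \<Rightarrow> nat \<Rightarrow> ('a::linorder) list set \<Rightarrow> bool" where
  "full dm n X \<longleftrightarrow> dm (cl n X - X) < dm X"

end

theory Submission
  imports Defs
begin

text \<open>For full A and B the new frontier points of A \<union> B are frontier points of A or of B:
  cl (A \<union> B) - (A \<union> B) \<subseteq> (cl A - A) \<union> (cl B - B). By (D2) its dimension is at most
  max (dim (cl A - A)) (dim (cl B - B)) < max (dim A) (dim B) = dim (A \<union> B).
  (D2) only speaks about definable sets, so the real work is that the closure of a definable
  set is definable: membership in cl X is a first-order condition in the order and X, and a
  structure is closed under the boolean operations, projections and coordinate substitutions
  needed to express it.\<close>

lemma length_mem_box: "y \<in> box a b \<Longrightarrow> length y = length a"
  by (simp add: box_def)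

lemma box_Int_box:
  assumes "length a = n" "length b = n" "length a' = n" "length b' = n"
  shows "box a b \<inter> box a' b' = box (map2 max a a') (map2 min b b')"
  using assms by (auto simp: box_def)

lemma cl_Un_subset: "cl n (A \<union> B) \<subseteq> cl n A \<union> cl n B"
proof
  fix x assume x: "x \<in> cl n (A \<union> B)"
  show "x \<in> cl n A \<union> cl n B"
  proof (rule ccontr)
    assume "x \<notin> cl n A \<union> cl n B"
    with x obtain a b a' b' where lengths: "length a = n" "length b = n" "length a' = n" "length b' = n"
      and "x \<in> box a b" "box a b \<inter> A = {}" "x \<in> box a' b'" "box a' b' \<inter> B = {}"
      by (auto simp: cl_def)
    then have "x \<in> box (map2 max a a') (map2 min b b')" "box (map2 max a a') (map2 min b b') \<inter> (A \<union> B) = {}"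
      using box_Int_box[OF lengths] by blast+
    with x lengths show False by (auto simp: cl_def)
  qed
qed

lemma mem_cl_iff:
  assumes "length x = n"
  shows "x \<in> cl n X \<longleftrightarrow> \<not> (\<exists>ab. length ab = 2 * n \<and> x \<in> box (take n ab) (drop n ab) \<and>
    \<not> (\<exists>y. length y = n \<and> y \<in> box (take n ab) (drop n ab) \<and> y \<in> X))"
proof -
  let ?meets = "\<lambda>a b. \<exists>y. length y = n \<and> y \<in> box a b \<and> y \<in> X"
  have meets_iff: "box a b \<inter> X \<noteq> {} \<longleftrightarrow> ?meets a b" if "length a = n" for a b
    using that length_mem_box by fastforce
  have "x \<in> cl n X \<longleftrightarrow> (\<forall>a b. length a = n \<and> length b = n \<and> x \<in> box a b \<longrightarrow> ?meets a b)"
    using assms by (simp add: cl_def tuples_def meets_iff)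
  also have "\<dots> \<longleftrightarrow> (\<forall>ab. length ab = 2 * n \<longrightarrow> x \<in> box (take n ab) (drop n ab) \<longrightarrow> ?meets (take n ab) (drop n ab))"
  proof (intro iffI allI impI)
    fix ab :: "'a list"
    assume "\<forall>a b. length a = n \<and> length b = n \<and> x \<in> box a b \<longrightarrow> ?meets a b"
      and "length ab = 2 * n" "x \<in> box (take n ab) (drop n ab)"
    then show "?meets (take n ab) (drop n ab)" by simp
  next
    fix a b :: "'a list"
    assume "\<forall>ab. length ab = 2 * n \<longrightarrow> x \<in> box (take n ab) (drop n ab) \<longrightarrow> ?meets (take n ab) (drop n ab)"
      and "length a = n \<and> length b = n \<and> x \<in> box a b"
    then show "?meets a b" by (elim allE[of _ "a @ b"]) simp
  qed
  finally show ?thesis by blast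
qed

definition definable :: "(nat \<Rightarrow> 'a list set set) \<Rightarrow> nat \<Rightarrow> ('a list \<Rightarrow> bool) \<Rightarrow> bool" where
  "definable S m P \<longleftrightarrow> {x \<in> tuples m. P x} \<in> S m"

lemma definable_cong:
  assumes "\<And>x. length x = m \<Longrightarrow> P x \<longleftrightarrow> Q x" and "definable S m P"
  shows "definable S m Q"
proof -
  have "{x \<in> tuples m. P x} = {x \<in> tuples m. Q x}" using assms(1) by (auto simp: tuples_def)
  with assms(2) show ?thesis unfolding definable_def by simp
qed

locale structure_on =
  fixes S :: "nat \<Rightarrow> 'a list set set"
  assumes is_structure: "is_structure S"
begin

lemma subset_tuples: "A \<in> S m \<Longrightarrow> A \<subseteq> tuples m"
  using is_structure unfolding is_structure_def by blast

lemma definable_mem_iff: "A \<subseteq> tuples m \<Longrightarrow> definable S m (\<lambda>x. x \<in> A) \<longleftrightarrow> A \<in> S m"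
  unfolding definable_def by (simp add: Collect_conj_eq Int_absorb1)

lemma definable_mem: "A \<in> S m \<Longrightarrow> definable S m (\<lambda>x. x \<in> A)"
  using definable_mem_iff subset_tuples by blast

lemma definable_True: "definable S m (\<lambda>x. True)"
  using is_structure unfolding definable_def is_structure_def by simp

lemma definable_not: "definable S m P \<Longrightarrow> definable S m (\<lambda>x. \<not> P x)"
proof -
  assume "definable S m P"
  then have "tuples m - {x \<in> tuples m. P x} \<in> S m"
    using is_structure unfolding definable_def is_structure_def by blast
  moreover have "tuples m - {x \<in> tuples m. P x} = {x \<in> tuples m. \<not> P x}" by blast
  ultimately show ?thesis unfolding definable_def by simp
qed

lemma definable_disj: "definable S m P \<Longrightarrow> definable S m Q \<Longrightarrow> definable S m (\<lambda>x. P x \<or> Q x)"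
proof -
  assume "definable S m P" "definable S m Q"
  then have "{x \<in> tuples m. P x} \<union> {x \<in> tuples m. Q x} \<in> S m"
    using is_structure unfolding definable_def is_structure_def by blast
  moreover have "{x \<in> tuples m. P x} \<union> {x \<in> tuples m. Q x} = {x \<in> tuples m. P x \<or> Q x}" by blast
  ultimately show ?thesis unfolding definable_def by simp
qed

lemma definable_conj: "definable S m P \<Longrightarrow> definable S m Q \<Longrightarrow> definable S m (\<lambda>x. P x \<and> Q x)"
  using definable_not[OF definable_disj[OF definable_not definable_not]] by simp

lemma definable_all_less:
  "(\<And>i. i < (k::nat) \<Longrightarrow> definable S m (P i)) \<Longrightarrow> definable S m (\<lambda>x. \<forall>i<k. P i x)"
proof (induction k)
  case 0
  show ?case using definable_True by simp
next
  case (Suc k)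
  then have "definable S m (\<lambda>x. (\<forall>i<k. P i x) \<and> P k x)" by (intro definable_conj) auto
  then show ?case by (rule definable_cong[rotated]) (auto simp: less_Suc_eq)
qed

lemma definable_tl: "definable S m P \<Longrightarrow> definable S (Suc m) (\<lambda>x. P (tl x))"
proof -
  assume "definable S m P"
  then have "{a # x | a x. x \<in> {y \<in> tuples m. P y}} \<in> S (Suc m)"
    using is_structure unfolding definable_def is_structure_def by blast
  moreover have "{a # x | a x. x \<in> {y \<in> tuples m. P y}} = {x \<in> tuples (Suc m). P (tl x)}"
    by (auto simp: tuples_def length_Suc_conv)
  ultimately show ?thesis unfolding definable_def by simp
qed

lemma definable_butlast: "definable S m P \<Longrightarrow> definable S (Suc m) (\<lambda>x. P (butlast x))"
proof -
  assume "definable S m P"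
  then have "{x @ [a] | x a. x \<in> {y \<in> tuples m. P y}} \<in> S (Suc m)"
    using is_structure unfolding definable_def is_structure_def by blast
  moreover have "{x @ [a] | x a. x \<in> {y \<in> tuples m. P y}} = {x \<in> tuples (Suc m). P (butlast x)}"
    by (auto simp: tuples_def length_Suc_conv_rev)
  ultimately show ?thesis unfolding definable_def by simp
qed

lemma definable_ex_snoc: "definable S (Suc m) P \<Longrightarrow> definable S m (\<lambda>x. \<exists>a. P (x @ [a]))"
proof -
  assume "definable S (Suc m) P"
  then have "butlast ` {y \<in> tuples (Suc m). P y} \<in> S m"
    using is_structure unfolding definable_def is_structure_def by blast
  moreover have "butlast ` {y \<in> tuples (Suc m). P y} = {x \<in> tuples m. \<exists>a. P (x @ [a])}"
  proof (intro equalityI subsetI)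
    fix x assume "x \<in> butlast ` {y \<in> tuples (Suc m). P y}"
    then show "x \<in> {x \<in> tuples m. \<exists>a. P (x @ [a])}"
      by (auto simp: tuples_def length_Suc_conv_rev)
  next
    fix x assume "x \<in> {x \<in> tuples m. \<exists>a. P (x @ [a])}"
    then obtain a where "x \<in> tuples m" "P (x @ [a])" by blast
    then show "x \<in> butlast ` {y \<in> tuples (Suc m). P y}"
      by (auto simp: tuples_def intro!: image_eqI[of _ _ "x @ [a]"])
  qed
  ultimately show ?thesis unfolding definable_def by simp
qed

lemma definable_drop: "definable S m P \<Longrightarrow> definable S (k + m) (\<lambda>x. P (drop k x))"
proof (induction k)
  case (Suc k)
  then show ?case using definable_tl[OF Suc.IH] by (simp add: drop_Suc)
qed simp

lemma definable_take: "definable S m P \<Longrightarrow> definable S (m + k) (\<lambda>x. P (take m x))"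
proof (induction k)
  case 0
  then show ?case using definable_cong[of m P "\<lambda>x. P (take m x)" S] by simp
next
  case (Suc k)
  have "definable S (Suc (m + k)) (\<lambda>x. P (take m x))"
    by (rule definable_cong[OF _ definable_butlast[OF Suc.IH[OF Suc.prems]]])
      (simp add: butlast_conv_take)
  then show ?case by simp
qed

lemma definable_slice:
  assumes "definable S k P" and "i + k \<le> m"
  shows "definable S m (\<lambda>x. P (take k (drop i x)))"
proof -
  have "definable S (i + k + (m - (i + k))) (\<lambda>x. P (drop i (take (i + k) x)))"
    using definable_take[OF definable_drop[OF assms(1)]] .
  then show ?thesis using assms(2) by (simp add: take_drop add.commute)
qed

lemma definable_ex:
  "definable S (m + k) P \<Longrightarrow> definable S m (\<lambda>x. \<exists>w. length w = k \<and> P (x @ w))"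
proof (induction k arbitrary: P)
  case 0
  then have "definable S m P" by simp
  then show ?case by (rule definable_cong[rotated]) simp
next
  case (Suc k)
  from Suc.IH[OF definable_ex_snoc] Suc.prems
  have "definable S m (\<lambda>x. \<exists>w. length w = k \<and> (\<exists>a. P (x @ w @ [a])))" by simp
  then show ?case
  proof (rule definable_cong[rotated])
    fix x :: "'a list"
    show "(\<exists>w. length w = k \<and> (\<exists>a. P (x @ w @ [a]))) \<longleftrightarrow> (\<exists>w. length w = Suc k \<and> P (x @ w))"
      by (metis length_Suc_conv_rev)
  qed
qed

lemma definable_nth_eq:
  assumes "i < m" and "j < m"
  shows "definable S m (\<lambda>x. x ! i = x ! j)"
proof -
  have diagonal: "definable S (Suc k) (\<lambda>y. y ! 0 = y ! k)" for k
  proof -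
    have "1 \<le> Suc k \<longrightarrow> {x \<in> tuples (Suc k). x ! 0 = x ! (Suc k - 1)} \<in> S (Suc k)"
      using is_structure unfolding is_structure_def by blast
    then show ?thesis by (simp add: definable_def)
  qed
  have ordered: "definable S m (\<lambda>x. x ! i = x ! j)" if "i \<le> j" "j < m" for i j
  proof -
    have "definable S m (\<lambda>x. drop i x ! 0 = drop i x ! (j - i))"
      using definable_slice[OF diagonal[of "j - i"], of i m] that by simp
    then show ?thesis by (rule definable_cong[rotated]) (use that in simp)
  qed
  show ?thesis
  proof (cases "i \<le> j")
    case False
    with assms have "definable S m (\<lambda>x. x ! j = x ! i)" by (intro ordered) auto
    then show ?thesis by (rule definable_cong[rotated]) auto
  qed (use assms ordered in auto)
qed

lemma definable_reindex:
  assumes "definable S k P" and "\<forall>j<k. \<sigma> j < m"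
  shows "definable S m (\<lambda>x. P (map (\<lambda>j. x ! \<sigma> j) [0..<k]))"
proof -
  have "definable S (m + k) (\<lambda>z. P (drop m z) \<and> (\<forall>j<k. z ! (m + j) = z ! \<sigma> j))"
    using assms by (intro definable_conj definable_drop definable_all_less definable_nth_eq) auto
  then have "definable S m (\<lambda>x. \<exists>w. length w = k \<and>
      P (drop m (x @ w)) \<and> (\<forall>j<k. (x @ w) ! (m + j) = (x @ w) ! \<sigma> j))"
    by (rule definable_ex)
  then show ?thesis
  proof (rule definable_cong[rotated])
    fix x :: "'a list"
    assume "length x = m"
    then have copies: "(\<forall>j<k. (x @ w) ! (m + j) = (x @ w) ! \<sigma> j) \<longleftrightarrow> w = map (\<lambda>j. x ! \<sigma> j) [0..<k]"
      if "length w = k" for w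
      using that assms(2) by (auto simp: nth_append list_eq_iff_nth_eq)
    show "(\<exists>w. length w = k \<and>
        P (drop m (x @ w)) \<and> (\<forall>j<k. (x @ w) ! (m + j) = (x @ w) ! \<sigma> j)) \<longleftrightarrow>
      P (map (\<lambda>j. x ! \<sigma> j) [0..<k])"
    proof
      assume "P (map (\<lambda>j. x ! \<sigma> j) [0..<k])"
      with copies[of "map (\<lambda>j. x ! \<sigma> j) [0..<k]"] \<open>length x = m\<close>
      show "\<exists>w. length w = k \<and> P (drop m (x @ w)) \<and> (\<forall>j<k. (x @ w) ! (m + j) = (x @ w) ! \<sigma> j)"
        by (intro exI[of _ "map (\<lambda>j. x ! \<sigma> j) [0..<k]"]) simp
    qed (use copies \<open>length x = m\<close> in auto)
  qed
qed

lemma Un_in_S: "A \<in> S m \<Longrightarrow> B \<in> S m \<Longrightarrow> A \<union> B \<in> S m"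
  using is_structure unfolding is_structure_def by blast

lemma Diff_in_S: "A \<in> S m \<Longrightarrow> B \<in> S m \<Longrightarrow> A - B \<in> S m"
proof -
  assume A: "A \<in> S m" and B: "B \<in> S m"
  have "definable S m (\<lambda>x. x \<in> A \<and> \<not> x \<in> B)"
    using A B by (intro definable_conj definable_not definable_mem)
  then show ?thesis using subset_tuples[OF A] definable_mem_iff[of "A - B" m] by auto
qed

lemma Union_in_S: "finite F \<Longrightarrow> F \<subseteq> S m \<Longrightarrow> \<Union>F \<in> S m"
proof (induction F rule: finite_induct)
  case empty
  have "tuples m - tuples m \<in> S m"
    using is_structure unfolding is_structure_def by blast
  then show ?case by simp
qed (simp add: Un_in_S)

end

locale ordered_structure = structure_on S for S :: "nat \<Rightarrow> 'a::linorder list set set" +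
  assumes less_definable: "{[x, y] | x y. x < y} \<in> S 2"
begin

lemma definable_nth_less:
  assumes "i < m" and "j < m"
  shows "definable S m (\<lambda>x. x ! i < x ! j)"
proof -
  have "definable S m (\<lambda>x. map (\<lambda>l. x ! (if l = 0 then i else j)) [0..<2] \<in> {[x, y] | x y. x < y})"
    using assms by (intro definable_reindex definable_mem less_definable) auto
  then show ?thesis by (rule definable_cong[rotated]) (simp add: numeral_2_eq_2 upt_Suc)
qed

lemma definable_in_box:
  assumes "p + k \<le> m" and "q + k \<le> m" and "r + k \<le> m"
  shows "definable S m (\<lambda>z. take k (drop r z) \<in> box (take k (drop p z)) (take k (drop q z)))"
proof -
  have "definable S m (\<lambda>z. \<forall>i<k. z ! (p + i) < z ! (r + i) \<and> z ! (r + i) < z ! (q + i))"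
    using assms by (intro definable_all_less definable_conj definable_nth_less) auto
  then show ?thesis by (rule definable_cong[rotated]) (use assms in \<open>auto simp: box_def\<close>)
qed

lemma cl_in_S:
  assumes "X \<in> S n"
  shows "cl n X \<in> S n"
proof -
  \<comment> \<open>Tuples are laid out as x @ a @ b @ y, blocks of length n, with a and b the box corners.\<close>
  have "definable S (n + 2 * n + n) (\<lambda>z. take n (drop (3 * n) z) \<in> box (take n (drop n z)) (take n (drop (2 * n) z))
      \<and> take n (drop (3 * n) z) \<in> X)"
    by (intro definable_conj definable_in_box definable_slice[OF definable_mem[OF assms]]) auto
  from definable_ex[OF this]
  have witness: "definable S (n + 2 * n) (\<lambda>w. \<exists>y. length y = n \<and>
      y \<in> box (take n (drop n w)) (take n (drop (2 * n) w)) \<and> y \<in> X)"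
    by (rule definable_cong[rotated]) (simp cong: conj_cong)
  have "definable S (n + 2 * n) (\<lambda>w. take n (drop 0 w) \<in> box (take n (drop n w)) (take n (drop (2 * n) w))
      \<and> \<not> (\<exists>y. length y = n \<and> y \<in> box (take n (drop n w)) (take n (drop (2 * n) w)) \<and> y \<in> X))"
    by (intro definable_conj definable_in_box definable_not witness) auto
  from definable_ex[OF this]
  have "definable S n (\<lambda>x. \<exists>ab. length ab = 2 * n \<and> x \<in> box (take n ab) (drop n ab) \<and>
      \<not> (\<exists>y. length y = n \<and> y \<in> box (take n ab) (drop n ab) \<and> y \<in> X))"
    by (rule definable_cong[rotated]) (simp cong: conj_cong)
  then have "definable S n (\<lambda>x. x \<in> cl n X)"
    by (rule definable_cong[rotated, OF definable_not]) (simp add: mem_cl_iff)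
  moreover have "cl n X \<subseteq> tuples n"
    by (auto simp: cl_def)
  ultimately show ?thesis
    using definable_mem_iff by blast
qed

context
  fixes dm :: "'a list set \<Rightarrow> ereal" and n :: nat
  assumes dim_Un: "\<And>X Y. X \<in> S n \<Longrightarrow> Y \<in> S n \<Longrightarrow> dm (X \<union> Y) = max (dm X) (dm Y)"
begin

lemma full_Un:
  assumes "A \<in> S n" "full dm n A" "B \<in> S n" "full dm n B"
  shows "full dm n (A \<union> B)"
proof -
  have dim_mono: "dm X \<le> dm Y" if "X \<in> S n" "Y \<in> S n" "X \<subseteq> Y" for X Y
  proof -
    have "dm Y = max (dm X) (dm Y)"
      using dim_Un[OF that(1,2)] that(3) by (simp add: sup.absorb2)
    then show ?thesis by (metis max.cobounded1)
  qed
  have frontier_in_S: "cl n X - X \<in> S n" if "X \<in> S n" for X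
    using that by (intro Diff_in_S cl_in_S)
  have "dm (cl n (A \<union> B) - (A \<union> B)) \<le> dm ((cl n A - A) \<union> (cl n B - B))"
    using cl_Un_subset by (intro dim_mono frontier_in_S Un_in_S assms) blast+
  also have "\<dots> = max (dm (cl n A - A)) (dm (cl n B - B))"
    by (intro dim_Un frontier_in_S assms)
  also have "\<dots> < max (dm A) (dm B)"
    using assms(2,4) unfolding full_def by (auto simp: max_less_iff_conj less_max_iff_disj)
  also have "\<dots> = dm (A \<union> B)"
    using dim_Un assms(1,3) by simp
  finally show ?thesis unfolding full_def .
qed

lemma full_Union:
  assumes "finite F" "F \<noteq> {}" "\<And>X. X \<in> F \<Longrightarrow> X \<in> S n \<and> full dm n X"
  shows "full dm n (\<Union>F)"
  using assms
proof (induction F rule: finite_ne_induct)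
  case (insert X F)
  then show ?case using Union_in_S[of F n] by (simp add: full_Un subset_iff)
qed simp

end

end

theorem lemma2p8:
  fixes L N :: "nat \<Rightarrow> ('a::{dense_linorder,no_bot,no_top}) list set set"
    and dm :: "'a list set \<Rightarrow> ereal"
    and n :: nat and \<F> :: "'a list set set"
  assumes "o_minimal_structure L"
    and "expansion N L"
    and "\<And>m X. X \<in> N m \<Longrightarrow> open_in_tuples m X \<Longrightarrow> X \<in> L m"
    and "dimension_function N L dm"
    and "finite \<F>" and "\<F> \<noteq> {}"
    and "\<And>X. X \<in> \<F> \<Longrightarrow> X \<in> N n \<and> full dm n X"
  shows "full dm n (\<Union>\<F>)"
proof -
  have "is_structure N" and "L 2 \<subseteq> N 2"
    using assms(2) unfolding expansion_def by blast+
  moreover have "{[x, y] | x y. x < y} \<in> L 2"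
    using assms(1) unfolding o_minimal_structure_def by (elim conjE)
  ultimately interpret ordered_structure N
    by unfold_locales blast+
  have "\<forall>n. \<forall>X\<in>N n. \<forall>Y\<in>N n. dm (X \<union> Y) = max (dm X) (dm Y)"
    using assms(4) unfolding dimension_function_def by (elim conjE)
  then show ?thesis
    using full_Union[of n dm] assms(5-7) by blast
qed

end
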